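(* Let $n\ge 3$, let $k$ be an integer with $0\le k\le\frac n3$, and let $t\in\{0,\dots,n-1\}$. There is a function $f$, assigning a real number to every multiset of $n-k$ unlabelled graphs on $n-1$ vertices, such that for every graph $G$ on $n$ vertices and every sub-multiset $\mathcal{C}$ of $\mathcal{D}(G)$ of size $n-k$, $$\tfrac14 d_t(G)-1\le f(\mathcal{C})\le d_{t-1}(G)+d_t(G)+d_{t+1}(G),$$ where $d_{-1}(G)=d_n(G)=0$.
   Context: All graphs are finite, simple and undirected. For a graph $G'$ and integer $t$, $d_t(G')$ is the number of vertices of degree $t$ in $G'$. For $v\in V(G)$, the card $G-v$ is obtained by deleting $v$ and its incident edges; the deck $\mathcal{D}(G)$ is the multiset of the $n$ cards $G-v$, $v\in V(G)$, up to isomorphism. *)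

theory Defs
  imports Complex_Main "HOL-Library.Multiset"
begin

type_synonym graph = "nat set \<times> nat set set"

definition wf_graph :: "graph \<Rightarrow> bool" where
  "wf_graph G \<longleftrightarrow> finite (fst G) \<and> (\<forall>e\<in>snd G. card e = 2 \<and> e \<subseteq> fst G)"

definition graph_iso :: "graph \<Rightarrow> graph \<Rightarrow> bool" where
  "graph_iso G H \<longleftrightarrow> (\<exists>\<phi>. bij_betw \<phi> (fst G) (fst H) \<and> snd H = (\<lambda>e. \<phi> ` e) ` snd G)"

text \<open>Unlabelled graph = isomorphism class.\<close>
definition iso_class :: "graph \<Rightarrow> graph set" where
  "iso_class G = {H. wf_graph H \<and> graph_iso G H}"

definition card_del :: "graph \<Rightarrow> nat \<Rightarrow> graph" where
  "card_del G v = (fst G - {v}, {e \<in> snd G. v \<notin> e})"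

definition deck :: "graph \<Rightarrow> graph set multiset" where
  "deck G = image_mset (\<lambda>v. iso_class (card_del G v)) (mset_set (fst G))"

definition degree :: "graph \<Rightarrow> nat \<Rightarrow> nat" where
  "degree G v = card {e \<in> snd G. v \<in> e}"

text \<open>Number of vertices of degree t (t an integer, so d (-1) = 0).\<close>
definition dcount :: "graph \<Rightarrow> int \<Rightarrow> nat" where
  "dcount G t = card {v \<in> fst G. int (degree G v) = t}"

end

theory Submission
  imports Defs
begin

text \<open>Deleting a vertex \<open>v\<close> lowers every other degree by at most one. Hence a vertex of
  degree \<open>t\<close> in \<open>G\<close> other than \<open>v\<close> has degree \<open>t\<close> or \<open>t - 1\<close> in \<open>G - v\<close>, giving
  \<open>d_t(G) - 1 \<le> d_t(G - v) + d_(t-1)(G - v)\<close>; conversely \<open>d_s(G - v) \<le> d_s(G) + d_(s+1)(G)\<close>.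
  So the statistic \<open>(d_t + d_(t-1)) / 2\<close> of every single card already lies between the two
  bounds. It is an isomorphism invariant, hence its average over the cards in \<open>C\<close> is a
  function of \<open>C\<close>; the hypotheses on \<open>n\<close> and \<open>k\<close> only serve to make \<open>C\<close> nonempty.\<close>

lemma wf_graph_finite_edges: "wf_graph G \<Longrightarrow> finite (snd G)"
  unfolding wf_graph_def by (meson PowI finite_Pow_iff finite_subset subsetI)

lemma wf_graph_card_del: "wf_graph G \<Longrightarrow> wf_graph (card_del G v)"
  unfolding wf_graph_def card_del_def by auto

lemma degree_graph_iso:
  assumes wf: "wf_graph H" and bij: "bij_betw \<phi> (fst H) (fst H')"
    and edges: "snd H' = (\<lambda>e. \<phi> ` e) ` snd H" and u: "u \<in> fst H"
  shows "degree H' (\<phi> u) = degree H u"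
proof -
  have inj: "inj_on \<phi> (fst H)" using bij by (simp add: bij_betw_def)
  have sub: "\<And>e. e \<in> snd H \<Longrightarrow> e \<subseteq> fst H" using wf by (auto simp: wf_graph_def)
  have inj_edges: "inj_on (\<lambda>e. \<phi> ` e) {e \<in> snd H. u \<in> e}"
    by (intro inj_onI) (metis (no_types, lifting) inj inj_on_image_eq_iff mem_Collect_eq sub)
  have "\<And>e. e \<in> snd H \<Longrightarrow> \<phi> u \<in> \<phi> ` e \<longleftrightarrow> u \<in> e"
    using inj sub u by (meson inj_on_image_mem_iff)
  then have "{e \<in> snd H'. \<phi> u \<in> e} = (\<lambda>e. \<phi> ` e) ` {e \<in> snd H. u \<in> e}"
    using edges by auto
  then show ?thesis unfolding degree_def using card_image[OF inj_edges] by simp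
qed

lemma dcount_graph_iso:
  assumes wf: "wf_graph H" and iso: "graph_iso H H'"
  shows "dcount H' s = dcount H s"
proof -
  obtain \<phi> where bij: "bij_betw \<phi> (fst H) (fst H')" and edges: "snd H' = (\<lambda>e. \<phi> ` e) ` snd H"
    using iso by (auto simp: graph_iso_def)
  have "fst H' = \<phi> ` fst H" using bij by (simp add: bij_betw_def)
  then have "{v \<in> fst H'. int (degree H' v) = s} = \<phi> ` {v \<in> fst H. int (degree H v) = s}"
    using degree_graph_iso[OF wf bij edges] by auto
  moreover have "inj_on \<phi> {v \<in> fst H. int (degree H v) = s}"
    using bij by (auto simp: bij_betw_def intro: inj_on_subset)
  ultimately show ?thesis unfolding dcount_def by (simp add: card_image)
qed

definition representative :: "graph set \<Rightarrow> graph" where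
  "representative X = (SOME H. H \<in> X)"

lemma dcount_representative_iso_class:
  assumes "wf_graph H"
  shows "dcount (representative (iso_class H)) s = dcount H s"
proof -
  have "H \<in> iso_class H"
    using assms by (auto simp: iso_class_def graph_iso_def intro!: exI[of _ id])
  then have "representative (iso_class H) \<in> iso_class H"
    unfolding representative_def by (rule someI)
  then show ?thesis
    using dcount_graph_iso[OF assms] by (simp add: iso_class_def)
qed

lemma degree_card_del:
  assumes wf: "wf_graph G" and "u \<noteq> v"
  shows "degree G u = degree (card_del G v) u \<or> degree G u = Suc (degree (card_del G v) u)"
proof -
  let ?A = "{e \<in> snd G. u \<in> e \<and> v \<notin> e}"
  let ?B = "{e \<in> snd G. u \<in> e \<and> v \<in> e}"
  have "?B \<subseteq> {{u, v}}"
  proof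
    fix e assume e: "e \<in> ?B"
    then have "card e = 2" using wf by (auto simp: wf_graph_def)
    with e \<open>u \<noteq> v\<close> show "e \<in> {{u, v}}" by (auto simp: card_2_iff)
  qed
  then have "card ?B \<le> 1"
    using card_mono[of "{{u, v}}"] by simp
  have "degree G u = card (?A \<union> ?B)"
    unfolding degree_def by (intro arg_cong[where f = card]) auto
  also have "\<dots> = card ?A + card ?B"
    using wf_graph_finite_edges[OF wf] by (intro card_Un_disjoint) auto
  finally have "degree G u = card ?A + card ?B" .
  moreover have "degree (card_del G v) u = card ?A"
    unfolding degree_def card_del_def by (auto intro: arg_cong[where f = card])
  ultimately show ?thesis using \<open>card ?B \<le> 1\<close> by linarith
qed

lemma dcount_le_dcount_card_del:
  assumes wf: "wf_graph G"
  shows "dcount G t \<le> dcount (card_del G v) t + dcount (card_del G v) (t - 1) + 1"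
proof -
  let ?T = "{u \<in> fst G. int (degree G u) = t}"
  let ?S = "\<lambda>s. {u \<in> fst (card_del G v). int (degree (card_del G v) u) = s}"
  have fin: "finite (?S s)" for s
    using wf by (simp add: wf_graph_def card_del_def)
  have "?T - {v} \<subseteq> ?S t \<union> ?S (t - 1)"
    using degree_card_del[OF wf] by (fastforce simp: card_del_def)
  then have "card (?T - {v}) \<le> card (?S t) + card (?S (t - 1))"
    using fin card_Un_le by (meson card_mono finite_UnI le_trans)
  moreover have "card ?T \<le> card (?T - {v}) + 1"
    by (cases "v \<in> ?T") (auto simp: card_Diff_singleton)
  ultimately show ?thesis unfolding dcount_def by linarith
qed

lemma dcount_card_del_le:
  assumes wf: "wf_graph G"
  shows "dcount (card_del G v) s \<le> dcount G s + dcount G (s + 1)"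
proof -
  let ?T = "\<lambda>s. {u \<in> fst G. int (degree G u) = s}"
  let ?S = "{u \<in> fst (card_del G v). int (degree (card_del G v) u) = s}"
  have fin: "finite (?T s)" for s
    using wf by (simp add: wf_graph_def)
  have "?S \<subseteq> ?T s \<union> ?T (s + 1)"
    using degree_card_del[OF wf] by (fastforce simp: card_del_def)
  then show ?thesis
    unfolding dcount_def using fin card_Un_le by (meson card_mono finite_UnI le_trans)
qed

definition card_statistic :: "int \<Rightarrow> graph \<Rightarrow> real" where
  "card_statistic t H = (real (dcount H t) + real (dcount H (t - 1))) / 2"

lemma card_statistic_card_del_bounds:
  assumes "wf_graph G"
  shows "real (dcount G t) / 4 - 1 \<le> card_statistic t (card_del G v)"
    and "card_statistic t (card_del G v)
           \<le> real (dcount G (t - 1)) + real (dcount G t) + real (dcount G (t + 1))"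
proof -
  show "real (dcount G t) / 4 - 1 \<le> card_statistic t (card_del G v)"
    using of_nat_mono[OF dcount_le_dcount_card_del[OF assms, of t v], where 'a = real]
    unfolding card_statistic_def by simp
  show "card_statistic t (card_del G v)
          \<le> real (dcount G (t - 1)) + real (dcount G t) + real (dcount G (t + 1))"
    using dcount_card_del_le[OF assms, of v t] dcount_card_del_le[OF assms, of v "t - 1"]
    unfolding card_statistic_def by simp
qed

lemma mean_mset_bounds:
  fixes g :: "'a \<Rightarrow> real"
  assumes "C \<noteq> {#}" and "\<And>x. x \<in># C \<Longrightarrow> L \<le> g x \<and> g x \<le> U"
  shows "L \<le> sum_mset (image_mset g C) / size C \<and> sum_mset (image_mset g C) / size C \<le> U"
proof -
  have "real (size C) * L \<le> sum_mset (image_mset g C)"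
    using sum_mset_mono[of C "\<lambda>_. L" g] assms(2) by simp
  moreover have "sum_mset (image_mset g C) \<le> real (size C) * U"
    using sum_mset_mono[of C g "\<lambda>_. U"] assms(2) by simp
  moreover have "real (size C) > 0" using assms(1) by (simp add: nonempty_has_size)
  ultimately show ?thesis by (simp add: field_simps)
qed

theorem lemma5:
  fixes n k :: nat and t :: int
  assumes "n \<ge> 3" and "3 * k \<le> n" and "0 \<le> t" and "t < int n"
  shows "\<exists>f :: graph set multiset \<Rightarrow> real.
    \<forall>G C. wf_graph G \<and> card (fst G) = n \<and> C \<subseteq># deck G \<and> size C = n - k \<longrightarrow>
      real (dcount G t) / 4 - 1 \<le> f C \<and>
      f C \<le> real (dcount G (t - 1)) + real (dcount G t) + real (dcount G (t + 1))"
proof (intro exI allI impI)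
  fix G C
  assume "wf_graph G \<and> card (fst G) = n \<and> C \<subseteq># deck G \<and> size C = n - k"
  then have wf: "wf_graph G" and sub: "C \<subseteq># deck G" and nonempty: "C \<noteq> {#}"
    using assms by auto
  let ?g = "\<lambda>X. card_statistic t (representative X)"
  have "real (dcount G t) / 4 - 1 \<le> ?g X \<and>
      ?g X \<le> real (dcount G (t - 1)) + real (dcount G t) + real (dcount G (t + 1))"
    if "X \<in># C" for X
  proof -
    have "X \<in># deck G" using sub \<open>X \<in># C\<close> by (rule mset_subset_eqD)
    then obtain v where "X = iso_class (card_del G v)" by (auto simp: deck_def)
    then have "?g X = card_statistic t (card_del G v)"
      by (simp add: card_statistic_def dcount_representative_iso_class wf_graph_card_del[OF wf])
    then show ?thesis using card_statistic_card_del_bounds[OF wf] by simp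
  qed
  from mean_mset_bounds[OF nonempty this]
  show "real (dcount G t) / 4 - 1 \<le> sum_mset (image_mset ?g C) / size C \<and>
      sum_mset (image_mset ?g C) / size C
        \<le> real (dcount G (t - 1)) + real (dcount G t) + real (dcount G (t + 1))" .
qed

end
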